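(* Let $d\ge1$ and let $\mathcal T_d=(t_{i-j})_{0\le i,j\le d-1}$ be an invertible complex Toeplitz matrix. Choose $t_+,t_-\in\mathbb C\setminus\{0\}$ with $t_++t_-=t_0$ and arbitrary $\gamma,\delta\in\mathbb C$, and set $S_{-1}=X^{2d+1}+1$ and $$S_0=T_{\gamma,\delta}=-t_--t_{-1}X-\dots-t_{-d+1}X^{d-1}+\gamma X^d+\delta X^{d+1}+t_{d-1}X^{d+2}+\dots+t_1X^{2d}+t_+X^{2d+1}.$$ Let $(S_j)$ be the symmetric subresultants of $S_{-1},S_0$ (degree $2d+1$). Then $S_d(0)\neq0$, and if $U=\sum_{i=0}^{d-1}u_iX^i$, $V=\sum_{i=0}^{d-1}v_iX^i\in\mathbb C[X]$ are any polynomials of degree at most $d-1$ with $X^{d-1}S_d=U\,(X^{2d+1}+1)+V\,T_{\gamma,\delta}$, then $\mathcal T_d^T(v_0,\dots,v_{d-1})^T=(0,\dots,0,-S_d(0))^T$; equivalently, the first column of $\mathcal T_d^{-1}$ is $-\frac{1}{S_d(0)}(v_{d-1},v_{d-2},\dots,v_0)^T$.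
   Context: Symmetric subresultants: for $A=\sum_{i=0}^n a_iX^i$, $B=\sum_{i=0}^n b_iX^i$ with $\deg A=n\ge1$ ($B$ of formal degree $n$), put $a_i=b_i=0$ for $i<0$ or $i>n$; for $1\le j\le n$, $0\le\ell\le n-j$, $\mathrm{Sylv}_{j,\ell}$ is the $2j\times2j$ matrix whose $r$-th row ($1\le r\le j$) is $(a_{1-r},\dots,a_{j-1-r},\ a_{j-r+\ell},\ a_{n+1-r},\dots,a_{n+j-r})$ and whose $(j+r)$-th row is the same with $b$ in place of $a$; $S_{-1}=A$, $S_0=B$, $S_j=\sum_{\ell=0}^{n-j}\det(\mathrm{Sylv}_{j,\ell})X^\ell$ for $1\le j\le n$. Here $n=2d+1$. (Such $U,V$ exist by the Bezout-type relation for symmetric subresultants.) *)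

theory Defs
  imports "HOL-Computational_Algebra.Polynomial" "Jordan_Normal_Form.Determinant"
begin

definition scoef :: "nat \<Rightarrow> 'a::comm_ring_1 poly \<Rightarrow> int \<Rightarrow> 'a" where
  "scoef n p k = (if 0 \<le> k \<and> k \<le> int n then coeff p (nat k) else 0)"

(* entry of the r-th row pattern (r = 1..j), column c = 1..2j, of Sylv_{j,l} *)
definition sylv_entry :: "nat \<Rightarrow> 'a::comm_ring_1 poly \<Rightarrow> nat \<Rightarrow> nat \<Rightarrow> nat \<Rightarrow> nat \<Rightarrow> 'a" where
  "sylv_entry n p j l r c =
     (if c \<le> j - 1 then scoef n p (int c - int r)
      else if c = j then scoef n p (int j - int r + int l)
      else scoef n p (int n + int (c - j) - int r))"

definition Sylv :: "nat \<Rightarrow> 'a::comm_ring_1 poly \<Rightarrow> 'a poly \<Rightarrow> nat \<Rightarrow> nat \<Rightarrow> 'a mat" where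
  "Sylv n A B j l = mat (2*j) (2*j) (\<lambda>(i,k).
      if i < j then sylv_entry n A j l (i+1) (k+1)
      else sylv_entry n B j l (i-j+1) (k+1))"

definition sym_subres :: "nat \<Rightarrow> 'a::comm_ring_1 poly \<Rightarrow> 'a poly \<Rightarrow> nat \<Rightarrow> 'a poly" where
  "sym_subres n A B j = (\<Sum>l\<le>n-j. monom (det (Sylv n A B j l)) l)"

definition toeplitz :: "nat \<Rightarrow> (int \<Rightarrow> complex) \<Rightarrow> complex mat" where
  "toeplitz d t = mat d d (\<lambda>(i,j). t (int i - int j))"

definition Tcoef :: "nat \<Rightarrow> (int \<Rightarrow> complex) \<Rightarrow> complex \<Rightarrow> complex \<Rightarrow> complex \<Rightarrow> complex \<Rightarrow> nat \<Rightarrow> complex" where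
  "Tcoef d t tp tm \<gamma> \<delta> k =
     (if k = 0 then - tm
      else if k < d then - t (- int k)
      else if k = d then \<gamma>
      else if k = d + 1 then \<delta>
      else if k \<le> 2*d then t (int (2*d+1) - int k)
      else if k = 2*d+1 then tp else 0)"

definition Tgd :: "nat \<Rightarrow> (int \<Rightarrow> complex) \<Rightarrow> complex \<Rightarrow> complex \<Rightarrow> complex \<Rightarrow> complex \<Rightarrow> complex poly" where
  "Tgd d t tp tm \<gamma> \<delta> = (\<Sum>k\<le>2*d+1. monom (Tcoef d t tp tm \<gamma> \<delta> k) k)"

end

theory Submission
  imports Defs
begin

text \<open>
  S_d(0) is det Sylv_{d,0}. In d x d blocks, the rows coming from X^(2d+1) + 1 are (I, I), and
  those coming from T_{gamma,delta} are (P, P + T_d): reducing modulo X^(2d+1) = -1 folds the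
  coefficients of T_{gamma,delta} onto the Toeplitz entries, the diagonal entry t_0 arising as
  t_+ + t_-. Hence S_d(0) = det T_d, which is nonzero.

  For k < d compare the coefficients of X^k and X^(k+2d+1) in
  X^(d-1) S_d = U (X^(2d+1) + 1) + V T_{gamma,delta}. Their difference vanishes for the U-term,
  is -S_d(0) [k = d-1] on the left, and by the same folding is the k-th entry of T_d^T v for the
  V-term. Finally T_d is persymmetric, so reversing v turns this into a solution of
  T_d w = e_0, i.e. the first column of the inverse.
\<close>

lemma coeff_Tgd [simp]: "coeff (Tgd d t tp tm \<gamma> \<delta>) k = Tcoef d t tp tm \<gamma> \<delta> k"
  unfolding Tgd_def by (auto simp: coeff_sum Tcoef_def)

lemma degree_Tgd: "degree (Tgd d t tp tm \<gamma> \<delta>) \<le> 2*d+1"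
  by (rule degree_le) (simp add: Tcoef_def)

lemma coeff_sym_subres:
  "coeff (sym_subres n A B j) l = (if l \<le> n - j then det (Sylv n A B j l) else 0)"
  unfolding sym_subres_def by (auto simp: coeff_sum)

lemma degree_sym_subres: "degree (sym_subres n A B j) \<le> n - j"
  by (rule degree_le) (simp add: coeff_sym_subres)

lemma poly_sym_subres_0: "poly (sym_subres n A B j) 0 = det (Sylv n A B j 0)"
  by (simp add: poly_0_coeff_0 coeff_sym_subres)

lemma scoef_Tgd_fold:
  assumes "tp + tm = t 0" and "i < d" and "k < d"
  shows "scoef (2*d+1) (Tgd d t tp tm \<gamma> \<delta>) (int (2*d+1) + int k - int i)
       = scoef (2*d+1) (Tgd d t tp tm \<gamma> \<delta>) (int k - int i) + t (int i - int k)"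
  using assms by (cases i k rule: linorder_cases)
    (auto simp: scoef_def Tcoef_def nat_diff_distrib simp flip: assms(1))

definition coeff_toeplitz_mat :: "nat \<Rightarrow> 'a::comm_ring_1 poly \<Rightarrow> nat \<Rightarrow> nat \<Rightarrow> 'a mat" where
  "coeff_toeplitz_mat n p j s = mat j j (\<lambda>(r, c). scoef n p (int s + int c - int r))"

lemma coeff_toeplitz_mat_carrier [simp]: "coeff_toeplitz_mat n p j s \<in> carrier_mat j j"
  by (simp add: coeff_toeplitz_mat_def)

lemma Sylv_0_four_block:
  "Sylv n A B j 0 = four_block_mat (coeff_toeplitz_mat n A j 0) (coeff_toeplitz_mat n A j n)
     (coeff_toeplitz_mat n B j 0) (coeff_toeplitz_mat n B j n)"
  by (rule eq_matI)
    (auto simp: Sylv_def sylv_entry_def coeff_toeplitz_mat_def intro!: arg_cong[where f="scoef _ _"])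

lemma scoef_xn_plus_1:
  "scoef n (monom 1 n + 1 :: 'a::comm_ring_1 poly) m = of_bool (m = int n) + of_bool (m = 0)"
  by (auto simp: scoef_def)

lemma coeff_toeplitz_mat_xn_plus_1:
  assumes "j \<le> n"
  shows "coeff_toeplitz_mat n (monom 1 n + 1) j 0 = 1\<^sub>m j"
    and "coeff_toeplitz_mat n (monom 1 n + 1) j n = 1\<^sub>m j"
  using assms by (auto simp: coeff_toeplitz_mat_def scoef_xn_plus_1 mat_eq_iff)

lemma coeff_toeplitz_mat_Tgd:
  assumes "tp + tm = t 0"
  shows "coeff_toeplitz_mat (2*d+1) (Tgd d t tp tm \<gamma> \<delta>) d (2*d+1)
       = coeff_toeplitz_mat (2*d+1) (Tgd d t tp tm \<gamma> \<delta>) d 0 + toeplitz d t"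
proof (rule eq_matI)
  fix i k assume "i < dim_row (coeff_toeplitz_mat (2*d+1) (Tgd d t tp tm \<gamma> \<delta>) d 0 + toeplitz d t)"
    and "k < dim_col (coeff_toeplitz_mat (2*d+1) (Tgd d t tp tm \<gamma> \<delta>) d 0 + toeplitz d t)"
  then have "i < d" "k < d" by (simp_all add: toeplitz_def)
  then show "coeff_toeplitz_mat (2*d+1) (Tgd d t tp tm \<gamma> \<delta>) d (2*d+1) $$ (i, k)
      = (coeff_toeplitz_mat (2*d+1) (Tgd d t tp tm \<gamma> \<delta>) d 0 + toeplitz d t) $$ (i, k)"
    using scoef_Tgd_fold[where t=t, OF assms \<open>i < d\<close> \<open>k < d\<close>]
    by (simp add: coeff_toeplitz_mat_def toeplitz_def)
qed (simp_all add: toeplitz_def coeff_toeplitz_mat_def)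

lemma det_four_block_mat_one_one:
  fixes P T :: "'a::idom mat"
  assumes P: "P \<in> carrier_mat n n" and T: "T \<in> carrier_mat n n"
  shows "det (four_block_mat (1\<^sub>m n) (1\<^sub>m n) P (P + T)) = det T"
proof -
  have "four_block_mat (1\<^sub>m n) (1\<^sub>m n) P (P + T)
      = four_block_mat (1\<^sub>m n) (0\<^sub>m n n) P T * four_block_mat (1\<^sub>m n) (1\<^sub>m n) (0\<^sub>m n n) (1\<^sub>m n)"
    using P T by (subst mult_four_block_mat) auto
  also have "det \<dots> = det (four_block_mat (1\<^sub>m n) (0\<^sub>m n n) P T)
      * det (four_block_mat (1\<^sub>m n) (1\<^sub>m n) (0\<^sub>m n n) (1\<^sub>m n))"
    by (rule det_mult[where n="n+n"]) (use P T in auto)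
  also have "\<dots> = det T"
    using det_four_block_mat_upper_right_zero[of "1\<^sub>m n" n "0\<^sub>m n n" n P T]
      det_four_block_mat_lower_left_zero[of "1\<^sub>m n :: 'a mat" n "1\<^sub>m n" n "0\<^sub>m n n" "1\<^sub>m n"] P T
    by simp
  finally show ?thesis .
qed

lemma toeplitz_carrier [simp]: "toeplitz d t \<in> carrier_mat d d"
  by (simp add: toeplitz_def)

lemma poly_sym_subres_Tgd_0:
  assumes "tp + tm = t 0"
  shows "poly (sym_subres (2*d+1) (monom 1 (2*d+1) + 1) (Tgd d t tp tm \<gamma> \<delta>) d) 0
       = det (toeplitz d t)"
proof -
  let ?P = "coeff_toeplitz_mat (2*d+1) (Tgd d t tp tm \<gamma> \<delta>) d 0"
  have "Sylv (2*d+1) (monom 1 (2*d+1) + 1) (Tgd d t tp tm \<gamma> \<delta>) d 0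
      = four_block_mat (1\<^sub>m d) (1\<^sub>m d) ?P (?P + toeplitz d t)"
    using coeff_toeplitz_mat_Tgd[where t=t, OF assms]
    by (simp add: Sylv_0_four_block coeff_toeplitz_mat_xn_plus_1)
  then show ?thesis
    by (simp add: poly_sym_subres_0 det_four_block_mat_one_one)
qed

lemma coeff_mult_scoef:
  assumes p: "degree p < N" and q: "degree q \<le> n"
  shows "coeff (p * q) m = (\<Sum>i<N. coeff p i * scoef n q (int m - int i))"
proof -
  define g where "g i = coeff p i * scoef n q (int m - int i)" for i
  have "coeff (p * q) m = (\<Sum>i\<le>m. g i)"
    unfolding coeff_mult g_def scoef_def using q
    by (intro sum.cong) (auto simp: nat_diff_distrib coeff_eq_0)
  also have "\<dots> = (\<Sum>i<N+m+1. g i)"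
    by (rule sum.mono_neutral_cong_left) (auto simp: g_def scoef_def)
  also have "\<dots> = (\<Sum>i<N. g i)"
    using p by (intro sum.mono_neutral_cong_right) (auto simp: g_def coeff_eq_0)
  finally show ?thesis by (simp add: g_def)
qed

lemma coeff_mult_Tgd_fold:
  fixes t :: "int \<Rightarrow> complex"
  assumes "tp + tm = t 0" and "degree V < d" and "k < d"
  shows "coeff (V * Tgd d t tp tm \<gamma> \<delta>) (k + (2*d+1)) - coeff (V * Tgd d t tp tm \<gamma> \<delta>) k
       = (\<Sum>i<d. t (int i - int k) * coeff V i)"
proof -
  have "coeff V i * scoef (2*d+1) (Tgd d t tp tm \<gamma> \<delta>) (int (k + (2*d+1)) - int i)
      - coeff V i * scoef (2*d+1) (Tgd d t tp tm \<gamma> \<delta>) (int k - int i)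
      = t (int i - int k) * coeff V i" if "i < d" for i
    using scoef_Tgd_fold[where t=t, OF assms(1) that assms(3)] by (simp add: algebra_simps)
  then show ?thesis
    using assms(2) by (simp add: coeff_mult_scoef[OF _ degree_Tgd] flip: sum_subtractf)
qed

lemma transpose_toeplitz_mult_vec_Bezout:
  fixes t :: "int \<Rightarrow> complex"
  assumes d: "d \<ge> 1" and t0: "tp + tm = t 0"
    and U: "degree U \<le> d - 1" and V: "degree V \<le> d - 1" and S: "degree S \<le> d + 1"
    and Bezout: "monom 1 (d-1) * S = U * (monom 1 (2*d+1) + 1) + V * Tgd d t tp tm \<gamma> \<delta>"
  shows "transpose_mat (toeplitz d t) *\<^sub>v vec d (coeff V)
       = vec d (\<lambda>k. if k = d - 1 then - poly S 0 else 0)"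
proof (rule eq_vecI)
  fix k assume "k < dim_vec (vec d (\<lambda>k. if k = d - 1 then - poly S 0 else 0))"
  then have k: "k < d" by simp
  let ?n = "2*d+1"
  let ?B = "Tgd d t tp tm \<gamma> \<delta>"
  let ?jump = "\<lambda>p. coeff p (k + ?n) - coeff p k"
  have "?jump (monom 1 (d-1) * S) = ?jump (U * (monom 1 ?n + 1)) + ?jump (V * ?B)"
    unfolding Bezout coeff_add by (rule add_diff_add)
  moreover have "?jump (monom 1 (d-1) * S) = (if k = d - 1 then - poly S 0 else 0)"
    using k S by (auto simp: coeff_monom_mult coeff_eq_0 poly_0_coeff_0)
  moreover have "?jump (U * (monom 1 ?n + 1)) = 0"
    using k U d by (simp add: distrib_left mult.commute[of U] coeff_monom_mult coeff_eq_0)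
  moreover have "?jump (V * ?B) = (\<Sum>i<d. t (int i - int k) * coeff V i)"
    using V d k by (intro coeff_mult_Tgd_fold[where t=t, OF t0]) auto
  ultimately have "(\<Sum>i<d. t (int i - int k) * coeff V i) = (if k = d - 1 then - poly S 0 else 0)"
    by simp
  then show "(transpose_mat (toeplitz d t) *\<^sub>v vec d (coeff V)) $ k
      = vec d (\<lambda>k. if k = d - 1 then - poly S 0 else 0) $ k"
    using k by (simp add: toeplitz_def scalar_prod_def atLeast0LessThan)
qed (simp add: toeplitz_def)

lemma toeplitz_mult_vec_rev:
  "toeplitz d t *\<^sub>v vec d (\<lambda>i. f (d - 1 - i))
     = vec d (\<lambda>i. (transpose_mat (toeplitz d t) *\<^sub>v vec d f) $ (d - 1 - i))"
proof (rule eq_vecI)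
  fix i assume "i < dim_vec (vec d (\<lambda>i. (transpose_mat (toeplitz d t) *\<^sub>v vec d f) $ (d - 1 - i)))"
  then have i: "i < d" by simp
  have "(\<Sum>j<d. t (int i - int j) * f (d - 1 - j))
      = (\<Sum>j<d. (\<lambda>j. t (int j - int (d - 1 - i)) * f j) (d - Suc j))"
    using i by (intro sum.cong) auto
  also have "\<dots> = (\<Sum>j<d. t (int j - int (d - 1 - i)) * f j)"
    by (rule sum.nat_diff_reindex)
  finally show "(toeplitz d t *\<^sub>v vec d (\<lambda>i. f (d - 1 - i))) $ i
      = vec d (\<lambda>i. (transpose_mat (toeplitz d t) *\<^sub>v vec d f) $ (d - 1 - i)) $ i"
    using i by (simp add: toeplitz_def scalar_prod_def atLeast0LessThan)
qed (simp add: toeplitz_def)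

lemma col_right_inverse:
  fixes A :: "'a::field mat"
  assumes A: "A \<in> carrier_mat n n" and Ainv: "Ainv \<in> carrier_mat n n" and inv: "A * Ainv = 1\<^sub>m n"
    and w: "w \<in> carrier_vec n" and Aw: "A *\<^sub>v w = unit_vec n j" and j: "j < n"
  shows "col Ainv j = w"
proof -
  have "col Ainv j = Ainv *\<^sub>v unit_vec n j"
    using col_mult2[OF Ainv one_carrier_mat j] Ainv j by simp
  also have "\<dots> = (Ainv * A) *\<^sub>v w"
    using A Ainv w by (simp add: Aw)
  also have "\<dots> = w"
    using mat_mult_left_right_inverse[OF A Ainv inv] w by simp
  finally show ?thesis .
qed

lemma toeplitz_inverse_col_0:
  fixes t :: "int \<Rightarrow> complex"
  assumes d: "d \<ge> 1" and c: "c \<noteq> 0"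
    and system: "transpose_mat (toeplitz d t) *\<^sub>v vec d f = vec d (\<lambda>i. if i = d - 1 then c else 0)"
    and Ti: "Ti \<in> carrier_mat d d" and inv: "toeplitz d t * Ti = 1\<^sub>m d"
  shows "col Ti 0 = vec d (\<lambda>i. f (d - 1 - i) / c)"
proof (rule col_right_inverse[OF toeplitz_carrier Ti inv _ _ d[unfolded One_nat_def Suc_le_eq]])
  have "toeplitz d t *\<^sub>v vec d (\<lambda>i. f (d - 1 - i))
      = vec d (\<lambda>i. (transpose_mat (toeplitz d t) *\<^sub>v vec d f) $ (d - 1 - i))"
    by (rule toeplitz_mult_vec_rev)
  also have "\<dots> = c \<cdot>\<^sub>v unit_vec d 0"
    using system d by (intro eq_vecI) (auto simp: unit_vec_def)
  finally have "toeplitz d t *\<^sub>v ((1 / c) \<cdot>\<^sub>v vec d (\<lambda>i. f (d - 1 - i))) = unit_vec d 0"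
    using c by (simp add: mult_mat_vec[OF toeplitz_carrier] smult_smult_assoc)
  moreover have "(1 / c) \<cdot>\<^sub>v vec d (\<lambda>i. f (d - 1 - i)) = vec d (\<lambda>i. f (d - 1 - i) / c)"
    by auto
  ultimately show "toeplitz d t *\<^sub>v vec d (\<lambda>i. f (d - 1 - i) / c) = unit_vec d 0"
    by simp
qed simp

lemma invertible_mat_det_nonzero:
  fixes A :: "'a::comm_ring_1 mat"
  assumes "invertible_mat A"
  shows "det A \<noteq> 0"
proof -
  obtain B where AB: "A * B = 1\<^sub>m (dim_row A)" and BA: "B * A = 1\<^sub>m (dim_row B)"
    and sq: "dim_col A = dim_row A"
    using assms unfolding invertible_mat_def inverts_mat_def square_mat.simps by blast
  have "dim_col B = dim_row A"
    using arg_cong[OF AB, of dim_col] by simp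
  moreover have "dim_row B = dim_row A"
    using arg_cong[OF BA, of dim_col] sq by simp
  ultimately have "det (A * B) = det A * det B"
    using sq by (intro det_mult[of _ "dim_row A"]) auto
  then have "det A * det B = 1"
    by (simp add: AB)
  then show ?thesis
    by (metis mult_zero_left zero_neq_one)
qed

theorem mainTheorem11:
  fixes d :: nat and t :: "int \<Rightarrow> complex" and tp tm \<gamma> \<delta> :: complex
  assumes "d \<ge> 1"
    and "invertible_mat (toeplitz d t)"
    and "tp \<noteq> 0" and "tm \<noteq> 0" and "tp + tm = t 0"
  shows "poly (sym_subres (2*d+1) (monom 1 (2*d+1) + 1) (Tgd d t tp tm \<gamma> \<delta>) d) 0 \<noteq> 0
    \<and> (\<forall>U V :: complex poly. degree U \<le> d - 1 \<longrightarrow> degree V \<le> d - 1 \<longrightarrow>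
        monom 1 (d-1) * sym_subres (2*d+1) (monom 1 (2*d+1) + 1) (Tgd d t tp tm \<gamma> \<delta>) d
          = U * (monom 1 (2*d+1) + 1) + V * Tgd d t tp tm \<gamma> \<delta> \<longrightarrow>
        transpose_mat (toeplitz d t) *\<^sub>v vec d (\<lambda>i. coeff V i)
          = vec d (\<lambda>i. if i = d - 1
               then - poly (sym_subres (2*d+1) (monom 1 (2*d+1) + 1) (Tgd d t tp tm \<gamma> \<delta>) d) 0
               else 0)
        \<and> (\<forall>Ti \<in> carrier_mat d d. toeplitz d t * Ti = 1\<^sub>m d \<longrightarrow>
             col Ti 0 = vec d (\<lambda>i. - coeff V (d - 1 - i)
               / poly (sym_subres (2*d+1) (monom 1 (2*d+1) + 1) (Tgd d t tp tm \<gamma> \<delta>) d) 0)))"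
proof -
  let ?S = "sym_subres (2*d+1) (monom 1 (2*d+1) + 1) (Tgd d t tp tm \<gamma> \<delta>) d"
  have nz: "poly ?S 0 \<noteq> 0"
    using poly_sym_subres_Tgd_0[where t=t, OF assms(5)] invertible_mat_det_nonzero[OF assms(2)]
    by simp
  show ?thesis
  proof (intro conjI nz allI impI ballI)
    fix U V :: "complex poly" and Ti
    assume U: "degree U \<le> d - 1" and V: "degree V \<le> d - 1"
      and Bezout: "monom 1 (d-1) * ?S = U * (monom 1 (2*d+1) + 1) + V * Tgd d t tp tm \<gamma> \<delta>"
    have "degree ?S \<le> d + 1"
      using degree_sym_subres[of "2*d+1" _ _ d] by simp
    with transpose_toeplitz_mult_vec_Bezout[OF assms(1,5) U V _ Bezout]
    show system: "transpose_mat (toeplitz d t) *\<^sub>v vec d (\<lambda>i. coeff V i)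
        = vec d (\<lambda>i. if i = d - 1 then - poly ?S 0 else 0)"
      by simp
    assume "Ti \<in> carrier_mat d d" "toeplitz d t * Ti = 1\<^sub>m d"
    with nz have "col Ti 0 = vec d (\<lambda>i. coeff V (d - 1 - i) / - poly ?S 0)"
      by (intro toeplitz_inverse_col_0[OF assms(1) _ system]) auto
    then show "col Ti 0 = vec d (\<lambda>i. - coeff V (d - 1 - i) / poly ?S 0)"
      by simp
  qed
qed

end
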